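(* Let $0<\alpha<1$ and $p,q>0$. If $\mathrm{Tr}\,\widetilde{SG}_{\alpha,p}(A,B)\le\mathrm{Tr}\,\mathcal{A}_{\alpha,q}(A,B)$ holds for all positive definite $2\times2$ matrices $A,B$, then $\min\{1,(1-\alpha)p\}\le q$.
   Context: For positive definite $A,B$: $A\#_\alpha B:=A^{1/2}(A^{-1/2}BA^{-1/2})^\alpha A^{1/2}$; $\widetilde F_\alpha(A,B):=(A^{-1}\#_\alpha B)^{1/2}A^{2(1-\alpha)}(A^{-1}\#_\alpha B)^{1/2}$; $\widetilde{SG}_{\alpha,p}(A,B):=\widetilde F_\alpha(A^p,B^p)^{1/p}$; $\mathcal{A}_{\alpha,q}(A,B):=((1-\alpha)A^q+\alpha B^q)^{1/q}$. $\mathrm{Tr}$ is the usual trace. *)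

theory Defs
  imports "HOL-Analysis.Analysis"
begin

definition cmat_adj :: "complex^'n^'n \<Rightarrow> complex^'n^'n" where
  "cmat_adj A = (\<chi> i j. cnj (A $ j $ i))"

definition cmat_hermitian :: "complex^'n^'n \<Rightarrow> bool" where
  "cmat_hermitian A \<longleftrightarrow> cmat_adj A = A"

definition cmat_posdef :: "complex^'n::finite^'n \<Rightarrow> bool" where
  "cmat_posdef A \<longleftrightarrow> cmat_hermitian A \<and>
     (\<forall>x::complex^'n. x \<noteq> 0 \<longrightarrow>
        Re (\<Sum>i\<in>UNIV. \<Sum>j\<in>UNIV. cnj (x $ i) * A $ i $ j * x $ j) > 0)"

definition cmat_unitary :: "complex^'n::finite^'n \<Rightarrow> bool" where
  "cmat_unitary U \<longleftrightarrow> U ** cmat_adj U = mat 1 \<and> cmat_adj U ** U = mat 1"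

definition cmat_diag :: "('n \<Rightarrow> real) \<Rightarrow> complex^'n^'n" where
  "cmat_diag d = (\<chi> i j. if i = j then complex_of_real (d i) else 0)"

text \<open>Real power of a positive definite matrix via spectral decomposition
  A = U diag(d) U*, A^r = U diag(d^r) U* (independent of the decomposition).\<close>
definition cmat_powr :: "complex^'n::finite^'n \<Rightarrow> real \<Rightarrow> complex^'n^'n" where
  "cmat_powr A r = (SOME X. \<exists>U d. cmat_unitary U \<and> (\<forall>i. d i > 0) \<and>
      A = U ** cmat_diag d ** cmat_adj U \<and>
      X = U ** cmat_diag (\<lambda>i. d i powr r) ** cmat_adj U)"

definition gmean :: "real \<Rightarrow> complex^'n::finite^'n \<Rightarrow> complex^'n^'n \<Rightarrow> complex^'n^'n" where
  "gmean \<alpha> A B = cmat_powr A (1/2) **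
     cmat_powr (cmat_powr A (-1/2) ** B ** cmat_powr A (-1/2)) \<alpha> ** cmat_powr A (1/2)"

definition Ftilde :: "real \<Rightarrow> complex^'n::finite^'n \<Rightarrow> complex^'n^'n \<Rightarrow> complex^'n^'n" where
  "Ftilde \<alpha> A B = (let G = gmean \<alpha> (matrix_inv A) B in
     cmat_powr G (1/2) ** cmat_powr A (2 * (1 - \<alpha>)) ** cmat_powr G (1/2))"

definition SGtilde :: "real \<Rightarrow> real \<Rightarrow> complex^'n::finite^'n \<Rightarrow> complex^'n^'n \<Rightarrow> complex^'n^'n" where
  "SGtilde \<alpha> p A B = cmat_powr (Ftilde \<alpha> (cmat_powr A p) (cmat_powr B p)) (1/p)"

definition Amean :: "real \<Rightarrow> real \<Rightarrow> complex^'n::finite^'n \<Rightarrow> complex^'n^'n \<Rightarrow> complex^'n^'n" where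
  "Amean \<alpha> q A B = cmat_powr ((1 - \<alpha>) *\<^sub>R cmat_powr A q + \<alpha> *\<^sub>R cmat_powr B q) (1/q)"

end

theory Submission
  imports Defs
begin

(* Take A = diag(1, s) and B = R diag(1, s) R^T, where R is the rotation with cos^2 = 1 - delta,
  and let s tend to 0.  The trace of SG~_{alpha,p}(A,B) is bounded below through the (1,1) entry
  of (A^(p/2) B^p A^(p/2))^alpha, which tends to (1 - delta)^alpha; so its liminf is at least
  (1 - delta)^(alpha/p).  The trace of A_{alpha,q}(A,B) tends to l1^(1/q) + l2^(1/q), where
  l1 + l2 = 1 and l1 l2 = alpha (1 - alpha) delta are the eigenvalues of
  (1 - alpha) diag(1,0) + alpha R diag(1,0) R^T.  As delta tends to 0 the first bound is
  1 - (alpha/p) delta + O(delta^2), while for q < 1 the second limit is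
  1 - (alpha (1 - alpha)/q) delta + o(delta); so q < (1 - alpha) p contradicts the trace inequality. *)

definition mat2 :: "'a \<Rightarrow> 'a \<Rightarrow> 'a \<Rightarrow> 'a \<Rightarrow> 'a^2^2" where
  "mat2 a b c d = (\<chi> i j. if i = 1 then (if j = 1 then a else b) else (if j = 1 then c else d))"

lemma mat2_nth [simp]:
  "mat2 a b c d $ 1 $ 1 = a" "mat2 a b c d $ 1 $ 2 = b"
  "mat2 a b c d $ 2 $ 1 = c" "mat2 a b c d $ 2 $ 2 = d"
  by (simp_all add: mat2_def)

lemma mat2_eqI:
  fixes X Y :: "'a^2^2"
  assumes "X $ 1 $ 1 = Y $ 1 $ 1" "X $ 1 $ 2 = Y $ 1 $ 2" "X $ 2 $ 1 = Y $ 2 $ 1" "X $ 2 $ 2 = Y $ 2 $ 2"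
  shows "X = Y"
  using assms by (simp add: vec_eq_iff forall_2)

lemma mat2_eq_iff [simp]:
  "mat2 a b c d = mat2 a' b' c' d' \<longleftrightarrow> a = a' \<and> b = b' \<and> c = c' \<and> d = d'"
  by (simp add: vec_eq_iff forall_2)

lemma mat2_mult [simp]:
  "mat2 a b c d ** mat2 e f g h = mat2 (a*e + b*g) (a*f + b*h) (c*e + d*g) (c*f + d*h)"
  by (rule mat2_eqI) (simp_all add: matrix_matrix_mult_def sum_2)

lemma mat2_add [simp]: "mat2 a b c d + mat2 e f g h = mat2 (a + e) (b + f) (c + g) (d + h)"
  by (rule mat2_eqI) simp_all

lemma scaleR_mat2 [simp]: "r *\<^sub>R mat2 a b c d = mat2 (r *\<^sub>R a) (r *\<^sub>R b) (r *\<^sub>R c) (r *\<^sub>R d)"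
  by (rule mat2_eqI) simp_all

lemma trace_mat2 [simp]: "trace (mat2 a b c d) = a + d"
  by (simp add: trace_def sum_2)

lemma det_mat2 [simp]: "det (mat2 a b c d) = a * d - b * c"
  by (simp add: det_2)

lemma mat_1_eq_mat2: "mat 1 = mat2 1 0 0 1"
  by (rule mat2_eqI) (simp_all add: mat_def)

lemma cmat_adj_mat2 [simp]: "cmat_adj (mat2 a b c d) = mat2 (cnj a) (cnj c) (cnj b) (cnj d)"
  by (rule mat2_eqI) (simp_all add: cmat_adj_def)

section \<open>Functions of a matrix via spectral decompositions\<close>

lemma matrix_add_rdistrib: "(B + C) ** A = B ** A + C ** (A :: 'a::semiring_1^'n^'m)"
  by (simp add: vec_eq_iff matrix_matrix_mult_def sum.distrib distrib_right)

lemma matrix_inv_unique: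
  fixes A :: "'a::semiring_1^'n^'n"
  assumes "A ** B = mat 1" and "B ** A = mat 1"
  shows "matrix_inv A = B"
proof -
  have inv: "A ** matrix_inv A = mat 1 \<and> matrix_inv A ** A = mat 1"
    unfolding matrix_inv_def by (rule someI[of _ B]) (use assms in simp)
  have "matrix_inv A = (B ** A) ** matrix_inv A"
    by (simp add: assms)
  also have "\<dots> = B"
    by (simp add: inv flip: matrix_mul_assoc)
  finally show ?thesis .
qed

lemma cmat_diag_mult_nth: "(cmat_diag d ** W) $ i $ j = of_real (d i) * W $ i $ j"
proof -
  have "(cmat_diag d ** W) $ i $ j = (\<Sum>k\<in>UNIV. if i = k then of_real (d i) * W $ k $ j else 0)"
    unfolding matrix_matrix_mult_def cmat_diag_def by (simp only: vec_lambda_beta) (rule sum.cong; simp)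
  then show ?thesis by simp
qed

lemma mult_cmat_diag_nth: "(W ** cmat_diag d) $ i $ j = W $ i $ j * of_real (d j)"
proof -
  have "(W ** cmat_diag d) $ i $ j = (\<Sum>k\<in>UNIV. if k = j then W $ i $ k * of_real (d j) else 0)"
    unfolding matrix_matrix_mult_def cmat_diag_def by (simp only: vec_lambda_beta) (rule sum.cong; simp)
  then show ?thesis by simp
qed

lemma cmat_diag_mult_cmat_diag: "cmat_diag d ** cmat_diag e = cmat_diag (\<lambda>i. d i * e i)"
  by (simp add: vec_eq_iff cmat_diag_mult_nth) (simp add: cmat_diag_def)

lemma cmat_diag_affine:
  "cmat_diag (\<lambda>i. \<beta>0 + \<beta>1 * d i) = \<beta>0 *\<^sub>R mat 1 + \<beta>1 *\<^sub>R cmat_diag d"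
  by (simp add: vec_eq_iff cmat_diag_def mat_def) (simp add: scaleR_conv_of_real)

lemma unitary_conj_mult:
  assumes "cmat_unitary U"
  shows "(U ** A ** cmat_adj U) ** (U ** B ** cmat_adj U) = U ** (A ** B) ** cmat_adj U"
proof -
  have "(U ** A ** cmat_adj U) ** (U ** B ** cmat_adj U) = U ** (A ** (cmat_adj U ** U) ** B) ** cmat_adj U"
    by (simp only: matrix_mul_assoc)
  with assms show ?thesis
    by (simp add: cmat_unitary_def)
qed

definition spectral_decomp :: "complex^'n::finite^'n \<Rightarrow> complex^'n^'n \<Rightarrow> ('n \<Rightarrow> real) \<Rightarrow> bool" where
  "spectral_decomp X U d \<longleftrightarrow> cmat_unitary U \<and> (\<forall>i. 0 < d i) \<and> X = U ** cmat_diag d ** cmat_adj U"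

lemma spectral_decompD:
  assumes "spectral_decomp X U d"
  shows "cmat_unitary U" "U ** cmat_adj U = mat 1" "cmat_adj U ** U = mat 1" "0 < d i"
    and "X = U ** cmat_diag d ** cmat_adj U"
  using assms by (auto simp: spectral_decomp_def cmat_unitary_def)

(* W = U* V intertwines diag d and diag e, so W_ij <> 0 forces d_i = e_j;
   hence W also intertwines diag (f o d) and diag (f o e). *)
lemma spectral_decomp_fun_unique:
  assumes "spectral_decomp X U d" and "spectral_decomp X V e"
  shows "U ** cmat_diag (\<lambda>i. f (d i)) ** cmat_adj U = V ** cmat_diag (\<lambda>i. f (e i)) ** cmat_adj V"
proof -
  define W where "W = cmat_adj U ** V"
  note U = spectral_decompD(3,2)[OF assms(1)] and V = spectral_decompD(3,2)[OF assms(2)]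
  have "cmat_adj U ** (U ** cmat_diag d ** cmat_adj U) ** V = cmat_adj U ** (V ** cmat_diag e ** cmat_adj V) ** V"
    using spectral_decompD(5)[OF assms(1)] spectral_decompD(5)[OF assms(2)] by simp
  then have dW: "cmat_diag d ** W = W ** cmat_diag e"
    by (simp add: W_def matrix_mul_assoc U V) (simp add: matrix_mul_assoc[symmetric] V)
  have fW: "cmat_diag (\<lambda>i. f (d i)) ** W = W ** cmat_diag (\<lambda>i. f (e i))"
  proof (simp only: vec_eq_iff, intro allI)
    fix i j
    have "of_real (d i) * W $ i $ j = W $ i $ j * of_real (e j)"
      using dW by (metis cmat_diag_mult_nth mult_cmat_diag_nth)
    then have "W $ i $ j = 0 \<or> d i = e j"
      by (simp add: mult.commute)
    then show "(cmat_diag (\<lambda>i. f (d i)) ** W) $ i $ j = (W ** cmat_diag (\<lambda>i. f (e i))) $ i $ j"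
      by (auto simp: cmat_diag_mult_nth mult_cmat_diag_nth)
  qed
  have "U ** cmat_diag (\<lambda>i. f (d i)) ** cmat_adj U
      = U ** cmat_diag (\<lambda>i. f (d i)) ** (cmat_adj U ** V ** cmat_adj V)"
    by (simp add: V matrix_mul_assoc[symmetric])
  also have "\<dots> = U ** (cmat_diag (\<lambda>i. f (d i)) ** W) ** cmat_adj V"
    by (simp add: W_def matrix_mul_assoc)
  also have "\<dots> = (U ** cmat_adj U) ** V ** cmat_diag (\<lambda>i. f (e i)) ** cmat_adj V"
    unfolding fW by (simp only: W_def matrix_mul_assoc)
  also have "\<dots> = V ** cmat_diag (\<lambda>i. f (e i)) ** cmat_adj V"
    by (simp add: U)
  finally show ?thesis .
qed

lemma cmat_powr_spectral:
  assumes "spectral_decomp X U d"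
  shows "cmat_powr X r = U ** cmat_diag (\<lambda>i. d i powr r) ** cmat_adj U"
proof -
  let ?P = "\<lambda>Y. \<exists>V e. cmat_unitary V \<and> (\<forall>i. e i > 0) \<and> X = V ** cmat_diag e ** cmat_adj V \<and>
      Y = V ** cmat_diag (\<lambda>i. e i powr r) ** cmat_adj V"
  have "?P (U ** cmat_diag (\<lambda>i. d i powr r) ** cmat_adj U)"
    using assms unfolding spectral_decomp_def by blast
  then have "?P (cmat_powr X r)"
    unfolding cmat_powr_def by (rule someI)
  then obtain V e where Ve: "spectral_decomp X V e"
    and powr_eq: "cmat_powr X r = V ** cmat_diag (\<lambda>i. e i powr r) ** cmat_adj V"
    unfolding spectral_decomp_def by blast
  show ?thesis
    unfolding powr_eq by (rule spectral_decomp_fun_unique[OF Ve assms, where f = "\<lambda>x. x powr r"])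
qed

lemma spectral_decomp_cmat_powr:
  assumes "spectral_decomp X U d"
  shows "spectral_decomp (cmat_powr X r) U (\<lambda>i. d i powr r)"
  using spectral_decompD(1,4)[OF assms] order_less_imp_not_eq2[OF spectral_decompD(4)[OF assms]]
  unfolding spectral_decomp_def cmat_powr_spectral[OF assms] by simp

lemma cmat_powr_add:
  assumes "spectral_decomp X U d"
  shows "cmat_powr X r ** cmat_powr X s = cmat_powr X (r + s)"
  using spectral_decompD(1)[OF assms] unfolding cmat_powr_spectral[OF assms]
  by (simp add: unitary_conj_mult cmat_diag_mult_cmat_diag powr_add)

lemma cmat_powr_zero:
  assumes "spectral_decomp X U d"
  shows "cmat_powr X 0 = mat 1"
proof -
  have "cmat_diag (\<lambda>i. d i powr 0) = mat 1"
    using spectral_decompD(4)[OF assms] by (simp add: vec_eq_iff cmat_diag_def mat_def less_le)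
  with spectral_decompD(2)[OF assms] show ?thesis
    unfolding cmat_powr_spectral[OF assms] by simp
qed

lemma cmat_powr_one:
  assumes "spectral_decomp X U d"
  shows "cmat_powr X 1 = X"
proof -
  have "(\<lambda>i. d i powr 1) = d"
    using spectral_decompD(4)[OF assms] by (simp add: less_imp_le)
  then show ?thesis
    unfolding cmat_powr_spectral[OF assms] by (simp add: spectral_decompD(5)[OF assms, symmetric])
qed

lemma cmat_powr_half_square:
  "spectral_decomp X U d \<Longrightarrow> cmat_powr X (1/2) ** cmat_powr X (1/2) = X"
  by (simp add: cmat_powr_add cmat_powr_one)

lemma matrix_inv_spectral:
  assumes "spectral_decomp X U d"
  shows "matrix_inv X = cmat_powr X (-1)"
proof (rule matrix_inv_unique)
  show "X ** cmat_powr X (-1) = mat 1" "cmat_powr X (-1) ** X = mat 1"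
    using cmat_powr_add[OF assms, of 1 "-1"] cmat_powr_add[OF assms, of "-1" 1]
    by (simp_all add: cmat_powr_one[OF assms] cmat_powr_zero[OF assms])
qed

lemma trace_spectral:
  assumes "spectral_decomp X U d"
  shows "trace X = of_real (\<Sum>i\<in>UNIV. d i)"
proof -
  have "trace X = trace (U ** (cmat_diag d ** cmat_adj U))"
    by (simp add: spectral_decompD(5)[OF assms] matrix_mul_assoc)
  also have "\<dots> = trace (cmat_diag d ** (cmat_adj U ** U))"
    by (subst trace_mul_sym) (simp add: matrix_mul_assoc)
  also have "\<dots> = of_real (\<Sum>i\<in>UNIV. d i)"
    by (simp add: spectral_decompD(3)[OF assms] trace_def cmat_diag_def)
  finally show ?thesis .
qed

lemma det_spectral:
  assumes "spectral_decomp X U d"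
  shows "det X = of_real (\<Prod>i\<in>UNIV. d i)"
proof -
  have "det X = det (cmat_diag d) * det (U ** cmat_adj U)"
    by (simp add: spectral_decompD(5)[OF assms] det_mul mult_ac)
  also have "\<dots> = of_real (\<Prod>i\<in>UNIV. d i)"
    by (simp add: spectral_decompD(2)[OF assms] det_diagonal cmat_diag_def)
  finally show ?thesis .
qed

lemma cmat_powr_affine:
  assumes "spectral_decomp X U d" and "\<And>i. d i powr r = \<beta>0 + \<beta>1 * d i"
  shows "cmat_powr X r = \<beta>0 *\<^sub>R mat 1 + \<beta>1 *\<^sub>R X"
proof -
  have "cmat_powr X r = U ** (\<beta>0 *\<^sub>R mat 1 + \<beta>1 *\<^sub>R cmat_diag d) ** cmat_adj U"
    by (simp add: cmat_powr_spectral[OF assms(1)] assms(2) cmat_diag_affine)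
  also have "\<dots> = \<beta>0 *\<^sub>R (U ** cmat_adj U) + \<beta>1 *\<^sub>R (U ** cmat_diag d ** cmat_adj U)"
    by (simp add: matrix_add_ldistrib matrix_add_rdistrib matrix_scalar_ac scalar_matrix_assoc)
  finally show ?thesis
    by (simp add: spectral_decompD(2,5)[OF assms(1), symmetric])
qed

section \<open>Eigenvalues from trace and determinant\<close>

(* The roots of x^2 - t x + D, i.e. the eigenvalues of a 2x2 matrix with trace t and determinant D. *)
definition eig_max :: "real \<Rightarrow> real \<Rightarrow> real" where
  "eig_max t D = t / 2 + sqrt (t\<^sup>2 / 4 - D)"

definition eig_min :: "real \<Rightarrow> real \<Rightarrow> real" where
  "eig_min t D = t / 2 - sqrt (t\<^sup>2 / 4 - D)"

definition eig_powr_sum :: "real \<Rightarrow> real \<Rightarrow> real \<Rightarrow> real" where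
  "eig_powr_sum t D r = eig_max t D powr r + eig_min t D powr r"

lemma eig_max_add_eig_min: "eig_max t D + eig_min t D = t"
  by (simp add: eig_max_def eig_min_def)

lemma eig_max_mult_eig_min:
  assumes "D \<le> t\<^sup>2 / 4"
  shows "eig_max t D * eig_min t D = D"
proof -
  have "eig_max t D * eig_min t D = (t / 2)\<^sup>2 - (sqrt (t\<^sup>2 / 4 - D))\<^sup>2"
    by (simp add: eig_max_def eig_min_def power2_eq_square algebra_simps)
  with assms show ?thesis
    by (simp add: power_divide)
qed

lemma eig_roots:
  assumes "x + y = t" and "x * y = D"
  shows "x = eig_max t D \<and> y = eig_min t D \<or> x = eig_min t D \<and> y = eig_max t D"
proof -
  have "t\<^sup>2 / 4 - D = ((x - y) / 2)\<^sup>2"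
    by (simp add: assms[symmetric] power2_eq_square field_simps)
  then have "sqrt (t\<^sup>2 / 4 - D) = \<bar>x - y\<bar> / 2"
    by simp
  then show ?thesis
    unfolding eig_max_def eig_min_def using assms(1) by (cases "y \<le> x") (auto simp: field_simps)
qed

lemma eig_min_nonneg:
  assumes "0 \<le> t" and "0 \<le> D"
  shows "0 \<le> eig_min t D"
proof -
  have "sqrt (t\<^sup>2 / 4 - D) \<le> sqrt ((t / 2)\<^sup>2)"
    using assms(2) by (intro real_sqrt_le_mono) (simp add: power_divide)
  then show ?thesis
    using assms(1) by (simp add: eig_min_def)
qed

lemma eig_min_pos:
  assumes "0 < t" and "0 < D"
  shows "0 < eig_min t D"
proof -
  have "sqrt (t\<^sup>2 / 4 - D) < sqrt ((t / 2)\<^sup>2)"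
    using assms(2) by (intro real_sqrt_less_mono) (simp add: power_divide)
  then show ?thesis
    using assms(1) by (simp add: eig_min_def)
qed

lemma eig_min_le_eig_max: "D \<le> t\<^sup>2 / 4 \<Longrightarrow> eig_min t D \<le> eig_max t D"
  by (simp add: eig_min_def eig_max_def)

lemma eig_min_less_eig_max: "D < t\<^sup>2 / 4 \<Longrightarrow> eig_min t D < eig_max t D"
  by (simp add: eig_min_def eig_max_def)

lemma eig_max_mono:
  assumes "0 \<le> s" and "s \<le> t"
  shows "eig_max s D \<le> eig_max t D"
proof -
  have "s\<^sup>2 \<le> t\<^sup>2"
    using assms by (simp add: power_mono)
  then have "sqrt (s\<^sup>2 / 4 - D) \<le> sqrt (t\<^sup>2 / 4 - D)"
    by simp
  with assms show ?thesis
    unfolding eig_max_def by linarith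
qed

lemma eig_max_zero: "0 \<le> t \<Longrightarrow> eig_max t 0 = t"
  by (simp add: eig_max_def real_sqrt_divide)

lemma eig_min_zero: "0 \<le> t \<Longrightarrow> eig_min t 0 = 0"
  by (simp add: eig_min_def real_sqrt_divide)

lemma tendsto_eig_max [tendsto_intros]:
  "(f \<longlongrightarrow> t) F \<Longrightarrow> (g \<longlongrightarrow> D) F \<Longrightarrow> ((\<lambda>x. eig_max (f x) (g x)) \<longlongrightarrow> eig_max t D) F"
  unfolding eig_max_def by (intro tendsto_intros) simp_all

lemma tendsto_eig_min [tendsto_intros]:
  "(f \<longlongrightarrow> t) F \<Longrightarrow> (g \<longlongrightarrow> D) F \<Longrightarrow> ((\<lambda>x. eig_min (f x) (g x)) \<longlongrightarrow> eig_min t D) F"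
  unfolding eig_min_def by (intro tendsto_intros) simp_all

lemma eig_max_powr_le_eig_powr_sum:
  assumes "0 \<le> s" and "s \<le> t" and "0 \<le> eig_max s D" and "0 \<le> r"
  shows "eig_max s D powr r \<le> eig_powr_sum t D r"
proof -
  have "eig_max s D powr r \<le> eig_max t D powr r"
    using assms by (intro powr_mono2 eig_max_mono)
  then show ?thesis
    by (simp add: eig_powr_sum_def add_increasing2)
qed

lemma tendsto_eig_powr_sum:
  assumes "(f \<longlongrightarrow> t) F" and "(g \<longlongrightarrow> D) F" and "0 < t" and "0 < D" and "D \<le> t\<^sup>2 / 4"
  shows "((\<lambda>x. eig_powr_sum (f x) (g x) r) \<longlongrightarrow> eig_powr_sum t D r) F"
proof -
  have "0 < eig_min t D"
    using assms(3,4) by (rule eig_min_pos)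
  moreover have "0 < eig_max t D"
    using calculation eig_min_le_eig_max[OF assms(5)] by linarith
  ultimately show ?thesis
    unfolding eig_powr_sum_def using assms(1,2) by (intro tendsto_intros tendsto_powr) auto
qed

lemma eig_powr_sum_pos:
  assumes "0 < t" and "0 < D"
  shows "0 < eig_powr_sum t D r"
proof -
  have "0 < eig_min t D"
    using assms(1,2) by (rule eig_min_pos)
  then show ?thesis
    by (simp add: eig_powr_sum_def add_nonneg_pos)
qed

definition chord_slope :: "real \<Rightarrow> real \<Rightarrow> real \<Rightarrow> real" where
  "chord_slope t D r = (eig_max t D powr r - eig_min t D powr r) / (eig_max t D - eig_min t D)"

definition chord_icept :: "real \<Rightarrow> real \<Rightarrow> real \<Rightarrow> real" where
  "chord_icept t D r = eig_max t D powr r - chord_slope t D r * eig_max t D"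

lemma chord_interpolates:
  assumes "D < t\<^sup>2 / 4" and "x = eig_max t D \<or> x = eig_min t D"
  shows "x powr r = chord_icept t D r + chord_slope t D r * x"
proof -
  have "eig_max t D - eig_min t D \<noteq> 0"
    using eig_min_less_eig_max[OF assms(1)] by simp
  then have "chord_slope t D r * (eig_max t D - eig_min t D) = eig_max t D powr r - eig_min t D powr r"
    by (simp add: chord_slope_def)
  with assms(2) show ?thesis
    by (auto simp: chord_icept_def right_diff_distrib)
qed

lemma tendsto_chord_at_eig_max:
  assumes t: "(f \<longlongrightarrow> t) F" and D: "(g \<longlongrightarrow> 0) F" and a: "(a \<longlongrightarrow> t) F"
    and "0 < t" and "0 < r" and D_nonneg: "\<forall>\<^sub>F x in F. 0 \<le> g x"
  shows "((\<lambda>x. chord_icept (f x) (g x) r + chord_slope (f x) (g x) r * a x) \<longlongrightarrow> t powr r) F"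
proof -
  have max: "((\<lambda>x. eig_max (f x) (g x)) \<longlongrightarrow> t) F"
    using tendsto_eig_max[OF t D] \<open>0 < t\<close> by (simp add: eig_max_zero)
  have min: "((\<lambda>x. eig_min (f x) (g x)) \<longlongrightarrow> 0) F"
    using tendsto_eig_min[OF t D] \<open>0 < t\<close> by (simp add: eig_min_zero)
  have "\<forall>\<^sub>F x in F. 0 \<le> eig_min (f x) (g x)"
    using order_tendstoD(1)[OF t \<open>0 < t\<close>] D_nonneg
    by eventually_elim (simp add: eig_min_nonneg)
  then have min_powr: "((\<lambda>x. eig_min (f x) (g x) powr r) \<longlongrightarrow> 0) F"
    using tendsto_powr'[OF min tendsto_const, of r] \<open>0 < r\<close> by simp
  have max_powr: "((\<lambda>x. eig_max (f x) (g x) powr r) \<longlongrightarrow> t powr r) F"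
    using tendsto_powr[OF max tendsto_const] \<open>0 < t\<close> by simp
  have slope: "((\<lambda>x. chord_slope (f x) (g x) r) \<longlongrightarrow> (t powr r - 0) / (t - 0)) F"
    unfolding chord_slope_def using \<open>0 < t\<close> by (intro tendsto_divide tendsto_diff max_powr min_powr max min) simp
  have "((\<lambda>x. chord_icept (f x) (g x) r + chord_slope (f x) (g x) r * a x)
      \<longlongrightarrow> (t powr r - (t powr r - 0) / (t - 0) * t) + (t powr r - 0) / (t - 0) * t) F"
    unfolding chord_icept_def by (intro tendsto_add tendsto_diff tendsto_mult max_powr slope max a)
  then show ?thesis
    by simp
qed

definition rsym :: "real \<Rightarrow> real \<Rightarrow> real \<Rightarrow> complex^2^2" where
  "rsym a b c = mat2 (of_real a) (of_real b) (of_real b) (of_real c)"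

definition posdef2 :: "real \<Rightarrow> real \<Rightarrow> real \<Rightarrow> bool" where
  "posdef2 a b c \<longleftrightarrow> 0 < a + c \<and> b\<^sup>2 < a * c"

lemma rsym_eq_iff [simp]: "rsym a b c = rsym a' b' c' \<longleftrightarrow> a = a' \<and> b = b' \<and> c = c'"
  by (simp add: rsym_def)

lemma trace_rsym [simp]: "trace (rsym a b c) = of_real (a + c)"
  by (simp add: rsym_def)

lemma det_rsym [simp]: "det (rsym a b c) = of_real (a * c - b\<^sup>2)"
  by (simp add: rsym_def power2_eq_square)

lemma rsym_add [simp]: "rsym a b c + rsym a' b' c' = rsym (a + a') (b + b') (c + c')"
  by (simp add: rsym_def)

lemma scaleR_rsym [simp]: "r *\<^sub>R rsym a b c = rsym (r * a) (r * b) (r * c)"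
  by (simp add: rsym_def) (simp add: scaleR_conv_of_real)

lemma rsym_diag_congruence: "rsym 1 0 k ** rsym a b c ** rsym 1 0 k = rsym a (k * b) (k\<^sup>2 * c)"
  by (simp add: rsym_def power2_eq_square)

lemma rsym_congruence_diag:
  "rsym x y z ** rsym 1 0 m ** rsym x y z = rsym (x\<^sup>2 + m * y\<^sup>2) (x * y + m * y * z) (y\<^sup>2 + m * z\<^sup>2)"
  by (simp add: rsym_def power2_eq_square algebra_simps)

lemma rsym_square: "rsym x y z ** rsym x y z = rsym (x\<^sup>2 + y\<^sup>2) (x * y + y * z) (y\<^sup>2 + z\<^sup>2)"
  by (simp add: rsym_def power2_eq_square algebra_simps)

lemma cmat_diag_two: "cmat_diag (\<lambda>i::2. if i = 1 then x else y) = rsym x 0 y"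
  by (rule mat2_eqI) (simp_all add: rsym_def cmat_diag_def)

lemma rsym_discriminant: "(a + c)\<^sup>2 / 4 - (a * c - b\<^sup>2) = ((a - c) / 2)\<^sup>2 + (b::real)\<^sup>2"
  by (simp add: power2_eq_square field_simps)

lemma rsym_det_le: "a * c - b\<^sup>2 \<le> (a + c)\<^sup>2 / (4::real)"
  using rsym_discriminant[of a c b] zero_le_power2[of "(a - c) / 2"] zero_le_power2[of b] by linarith

lemma rsym_det_less:
  assumes "b \<noteq> 0"
  shows "a * c - b\<^sup>2 < (a + c)\<^sup>2 / (4::real)"
proof -
  have "0 < b\<^sup>2"
    using assms by simp
  then show ?thesis
    using rsym_discriminant[of a c b] zero_le_power2[of "(a - c) / 2"] by linarith
qed

lemma posdef2_diag_pos:
  assumes "posdef2 a b c"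
  shows "0 < a" and "0 < c"
proof -
  have "0 < a * c"
    using assms unfolding posdef2_def by (meson le_less_trans zero_le_power2)
  with assms show "0 < a" "0 < c"
    unfolding posdef2_def by (auto simp: zero_less_mult_iff)
qed

lemma posdef2_congruence: "posdef2 a b c \<Longrightarrow> k \<noteq> 0 \<Longrightarrow> posdef2 a (k * b) (k\<^sup>2 * c)"
  using posdef2_diag_pos[of a b c]
  by (auto simp: posdef2_def power_mult_distrib algebra_simps intro: add_pos_nonneg)

lemma quadratic_form_pos:
  fixes a b c u v :: real
  assumes "0 < a" and "b\<^sup>2 < a * c"
  shows "0 \<le> a * u\<^sup>2 + 2 * b * u * v + c * v\<^sup>2"
    and "(u, v) \<noteq> (0, 0) \<Longrightarrow> 0 < a * u\<^sup>2 + 2 * b * u * v + c * v\<^sup>2"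
proof -
  have complete_square: "a * (a * u\<^sup>2 + 2 * b * u * v + c * v\<^sup>2) = (a * u + b * v)\<^sup>2 + (a * c - b\<^sup>2) * v\<^sup>2"
    by (simp add: power2_eq_square algebra_simps)
  have "0 \<le> (a * u + b * v)\<^sup>2 + (a * c - b\<^sup>2) * v\<^sup>2"
    using assms by simp
  with complete_square \<open>0 < a\<close> show "0 \<le> a * u\<^sup>2 + 2 * b * u * v + c * v\<^sup>2"
    by (metis zero_le_mult_iff not_le)
  assume "(u, v) \<noteq> (0, 0)"
  then have "0 < (a * u + b * v)\<^sup>2 + (a * c - b\<^sup>2) * v\<^sup>2"
    using assms by (cases "v = 0") (auto intro: add_nonneg_pos)
  with complete_square \<open>0 < a\<close> show "0 < a * u\<^sup>2 + 2 * b * u * v + c * v\<^sup>2"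
    by (metis zero_less_mult_iff not_less_iff_gr_or_eq)
qed

lemma Re_cnj_mult_of_real: "Re (cnj z * of_real a * w) = a * (Re z * Re w + Im z * Im w)"
  by (simp add: algebra_simps)

lemma rsym_posdef:
  assumes "posdef2 a b c"
  shows "cmat_posdef (rsym a b c)"
proof -
  have a: "0 < a"
    by (rule posdef2_diag_pos(1)[OF assms])
  have disc: "b\<^sup>2 < a * c"
    using assms by (simp add: posdef2_def)
  let ?Q = "\<lambda>u v. a * u\<^sup>2 + 2 * b * u * v + c * v\<^sup>2"
  have "0 < Re (\<Sum>i\<in>UNIV. \<Sum>j\<in>UNIV. cnj (x $ i) * rsym a b c $ i $ j * x $ j)"
    if "x \<noteq> 0" for x :: "complex^2"
  proof -
    have "(\<Sum>i\<in>UNIV. \<Sum>j\<in>UNIV. cnj (x $ i) * rsym a b c $ i $ j * x $ j)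
        = cnj (x $ 1) * of_real a * x $ 1 + cnj (x $ 1) * of_real b * x $ 2
          + (cnj (x $ 2) * of_real b * x $ 1 + cnj (x $ 2) * of_real c * x $ 2)"
      by (simp add: sum_2 rsym_def)
    then have form: "Re (\<Sum>i\<in>UNIV. \<Sum>j\<in>UNIV. cnj (x $ i) * rsym a b c $ i $ j * x $ j)
        = ?Q (Re (x $ 1)) (Re (x $ 2)) + ?Q (Im (x $ 1)) (Im (x $ 2))"
      by (simp only: plus_complex.sel Re_cnj_mult_of_real) (simp add: power2_eq_square algebra_simps)
    have "(Re (x $ 1), Re (x $ 2)) \<noteq> (0, 0) \<or> (Im (x $ 1), Im (x $ 2)) \<noteq> (0, 0)"
      using that by (auto simp: vec_eq_iff forall_2 complex_eq_iff)
    then show ?thesis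
      unfolding form using quadratic_form_pos[OF a disc] by (meson add_nonneg_pos add_pos_nonneg)
  qed
  moreover have "cmat_hermitian (rsym a b c)"
    by (simp add: cmat_hermitian_def rsym_def)
  ultimately show ?thesis
    by (simp add: cmat_posdef_def)
qed

definition rot :: "real \<Rightarrow> real \<Rightarrow> complex^2^2" where
  "rot u v = mat2 (of_real u) (of_real (- v)) (of_real v) (of_real u)"

lemma rot_unitary:
  assumes "u\<^sup>2 + v\<^sup>2 = 1"
  shows "cmat_unitary (rot u v)"
proof -
  have "complex_of_real u * complex_of_real u + complex_of_real v * complex_of_real v = 1"
    using arg_cong[OF assms, of complex_of_real] by (simp add: power2_eq_square)
  then show ?thesis
    by (simp add: cmat_unitary_def rot_def mat_1_eq_mat2 algebra_simps)
qed

definition rot_diag :: "real \<Rightarrow> real \<Rightarrow> real \<Rightarrow> real \<Rightarrow> complex^2^2" where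
  "rot_diag u v x y = rot u v ** rsym x 0 y ** cmat_adj (rot u v)"

lemma rot_diag_eq_rsym:
  "rot_diag u v x y = rsym (u\<^sup>2 * x + v\<^sup>2 * y) (u * v * (x - y)) (v\<^sup>2 * x + u\<^sup>2 * y)"
  by (simp add: rot_diag_def rot_def rsym_def power2_eq_square algebra_simps)

lemma rot_diag_1_0: "rot_diag 1 0 x y = rsym x 0 y"
  by (simp add: rot_diag_eq_rsym)

lemma spectral_decomp_rot_diag:
  assumes "u\<^sup>2 + v\<^sup>2 = 1" and "0 < x" and "0 < y"
  shows "spectral_decomp (rot_diag u v x y) (rot u v) (\<lambda>i. if i = 1 then x else y)"
  using assms by (simp add: spectral_decomp_def rot_diag_def rot_unitary cmat_diag_two)

lemma cmat_powr_rot_diag: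
  assumes "u\<^sup>2 + v\<^sup>2 = 1" and "0 < x" and "0 < y"
  shows "cmat_powr (rot_diag u v x y) r = rot_diag u v (x powr r) (y powr r)"
proof -
  have "(\<lambda>i::2. (if i = 1 then x else y) powr r) = (\<lambda>i. if i = 1 then x powr r else y powr r)"
    by auto
  then show ?thesis
    unfolding cmat_powr_spectral[OF spectral_decomp_rot_diag[OF assms]] by (simp add: cmat_diag_two rot_diag_def)
qed

lemma cmat_powr_rsym_diag:
  "0 < x \<Longrightarrow> 0 < y \<Longrightarrow> cmat_powr (rsym x 0 y) r = rsym (x powr r) 0 (y powr r)"
  using cmat_powr_rot_diag[of 1 0 x y r] by (simp add: rot_diag_1_0)

lemma rot_diag_det:
  fixes u v x y :: real
  assumes "u\<^sup>2 + v\<^sup>2 = 1"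
  shows "(u\<^sup>2 * x + v\<^sup>2 * y) * (v\<^sup>2 * x + u\<^sup>2 * y) - (u * v * (x - y))\<^sup>2 = x * y"
proof -
  have "(u\<^sup>2 * x + v\<^sup>2 * y) * (v\<^sup>2 * x + u\<^sup>2 * y) - (u * v * (x - y))\<^sup>2 = x * y * (u\<^sup>2 + v\<^sup>2)\<^sup>2"
    by (simp add: power2_eq_square algebra_simps)
  with assms show ?thesis
    by simp
qed

lemma posdef2_rot_diag:
  assumes "u\<^sup>2 + v\<^sup>2 = 1" and "0 < x" and "0 < y"
  shows "posdef2 (u\<^sup>2 * x + v\<^sup>2 * y) (u * v * (x - y)) (v\<^sup>2 * x + u\<^sup>2 * y)"
proof -
  have "(u\<^sup>2 * x + v\<^sup>2 * y) + (v\<^sup>2 * x + u\<^sup>2 * y) = x + y"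
    using assms(1) by (simp add: algebra_simps flip: distrib_left)
  with rot_diag_det[OF assms(1), of x y] assms(2,3) mult_pos_pos[OF assms(2,3)] show ?thesis
    unfolding posdef2_def by linarith
qed

lemma rot_diag_posdef:
  "u\<^sup>2 + v\<^sup>2 = 1 \<Longrightarrow> 0 < x \<Longrightarrow> 0 < y \<Longrightarrow> cmat_posdef (rot_diag u v x y)"
  by (simp add: rot_diag_eq_rsym rsym_posdef posdef2_rot_diag)

lemma mat_1_eq_rsym: "mat 1 = rsym 1 0 1"
  by (simp add: rsym_def mat_1_eq_mat2)

(* (b, l - a) is an eigenvector of rsym a b c for its larger eigenvalue l. *)
lemma rsym_eq_rot_diag:
  fixes a b c :: real
  assumes "b \<noteq> 0"
  defines "l \<equiv> eig_max (a + c) (a * c - b\<^sup>2)" and "m \<equiv> eig_min (a + c) (a * c - b\<^sup>2)"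
  obtains u v where "u\<^sup>2 + v\<^sup>2 = 1" and "rsym a b c = rot_diag u v l m"
proof -
  have sum: "l + m = a + c" and prod: "l * m = a * c - b\<^sup>2"
    by (simp_all add: l_def m_def eig_max_add_eig_min eig_max_mult_eig_min[OF rsym_det_le])
  then have key: "(l - a) * (a - m) = b\<^sup>2"
    by algebra
  define n where "n = sqrt (b\<^sup>2 + (l - a)\<^sup>2)"
  have "0 < n"
    using assms(1) by (simp add: n_def add_pos_nonneg)
  then have n2: "n\<^sup>2 = b\<^sup>2 + (l - a)\<^sup>2"
    by (simp add: n_def add_nonneg_nonneg)
  define u v where "u = b / n" and "v = (l - a) / n"
  have uv: "u\<^sup>2 + v\<^sup>2 = 1"
    using assms(1) by (simp add: u_def v_def power_divide n2 flip: add_divide_distrib)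
  have "b\<^sup>2 * l + (l - a)\<^sup>2 * m = a * n\<^sup>2"
    unfolding n2 using key by algebra
  then have e11: "u\<^sup>2 * l + v\<^sup>2 * m = a"
    using \<open>0 < n\<close> by (simp add: u_def v_def power_divide field_simps)
  have "b * (l - a) * (l - m) = b * n\<^sup>2"
    unfolding n2 using key by algebra
  then have e12: "u * v * (l - m) = b"
    using \<open>0 < n\<close> by (simp add: u_def v_def power2_eq_square field_simps)
  have "(l - a)\<^sup>2 * l + b\<^sup>2 * m = c * n\<^sup>2"
    unfolding n2 using key sum by algebra
  then have e22: "v\<^sup>2 * l + u\<^sup>2 * m = c"
    using \<open>0 < n\<close> by (simp add: u_def v_def power_divide field_simps)
  have "rsym a b c = rot_diag u v l m"
    by (simp add: rot_diag_eq_rsym e11 e12 e22)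
  with uv show ?thesis
    by (rule that)
qed

lemma rsym_spectral_decomp:
  assumes "posdef2 a b c"
  obtains U d where "spectral_decomp (rsym a b c) U d"
proof (cases "b = 0")
  case True
  then have "spectral_decomp (rsym a b c) (rot 1 0) (\<lambda>i. if i = 1 then a else c)"
    using spectral_decomp_rot_diag[of 1 0 a c] posdef2_diag_pos[OF assms] by (simp add: rot_diag_1_0)
  then show ?thesis
    by (rule that)
next
  case False
  define l m where "l = eig_max (a + c) (a * c - b\<^sup>2)" and "m = eig_min (a + c) (a * c - b\<^sup>2)"
  have "0 < m"
    using assms unfolding m_def posdef2_def by (intro eig_min_pos) simp_all
  moreover have "0 < l"
    using calculation eig_min_le_eig_max[OF rsym_det_le[of a c b]] by (simp add: l_def m_def)
  moreover obtain u v where "u\<^sup>2 + v\<^sup>2 = 1" and "rsym a b c = rot_diag u v l m"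
    using rsym_eq_rot_diag[OF False] unfolding l_def m_def by blast
  ultimately show ?thesis
    using spectral_decomp_rot_diag that by metis
qed

lemma spectral_decomp_rsym_eigenvalues:
  assumes "spectral_decomp (rsym a b c) U d"
  shows "d 1 = eig_max (a + c) (a * c - b\<^sup>2) \<and> d 2 = eig_min (a + c) (a * c - b\<^sup>2)
       \<or> d 1 = eig_min (a + c) (a * c - b\<^sup>2) \<and> d 2 = eig_max (a + c) (a * c - b\<^sup>2)"
proof (rule eig_roots)
  show "d 1 + d 2 = a + c"
    using trace_spectral[OF assms] by (simp add: sum_2 del: of_real_add)
  show "d 1 * d 2 = a * c - b\<^sup>2"
    using det_spectral[OF assms] by (simp add: UNIV_2 del: of_real_mult of_real_diff of_real_power)
qed

lemma trace_cmat_powr_rsym: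
  assumes "posdef2 a b c"
  shows "trace (cmat_powr (rsym a b c) r) = of_real (eig_powr_sum (a + c) (a * c - b\<^sup>2) r)"
proof -
  obtain U d where dec: "spectral_decomp (rsym a b c) U d"
    using rsym_spectral_decomp[OF assms] .
  show ?thesis
    using trace_spectral[OF spectral_decomp_cmat_powr[OF dec]] spectral_decomp_rsym_eigenvalues[OF dec]
    by (auto simp: sum_2 eig_powr_sum_def)
qed

lemma det_cmat_powr_rsym:
  assumes "posdef2 a b c"
  shows "det (cmat_powr (rsym a b c) r) = of_real ((a * c - b\<^sup>2) powr r)"
proof -
  obtain U d where dec: "spectral_decomp (rsym a b c) U d"
    using rsym_spectral_decomp[OF assms] .
  have "d 1 * d 2 = a * c - b\<^sup>2"
    using det_spectral[OF dec] by (simp add: UNIV_2 del: of_real_mult of_real_diff of_real_power)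
  then have "(a * c - b\<^sup>2) powr r = d 1 powr r * d 2 powr r"
    by (simp flip: powr_mult)
  then show ?thesis
    using det_spectral[OF spectral_decomp_cmat_powr[OF dec]] by (simp add: UNIV_2)
qed

lemma cmat_powr_rsym_chord:
  fixes a b c r :: real
  assumes "posdef2 a b c" and "b \<noteq> 0"
  defines "\<beta>0 \<equiv> chord_icept (a + c) (a * c - b\<^sup>2) r" and "\<beta>1 \<equiv> chord_slope (a + c) (a * c - b\<^sup>2) r"
  shows "cmat_powr (rsym a b c) r = rsym (\<beta>0 + \<beta>1 * a) (\<beta>1 * b) (\<beta>0 + \<beta>1 * c)"
proof -
  obtain U d where dec: "spectral_decomp (rsym a b c) U d"
    using rsym_spectral_decomp[OF assms(1)] .
  have "d i powr r = \<beta>0 + \<beta>1 * d i" for i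
    using spectral_decomp_rsym_eigenvalues[OF dec] exhaust_2[of i]
    unfolding \<beta>0_def \<beta>1_def by (metis chord_interpolates rsym_det_less[OF assms(2)])
  then show ?thesis
    by (simp add: cmat_powr_affine[OF dec] mat_1_eq_rsym)
qed

lemma cmat_powr_rsym_posdef2:
  assumes "posdef2 a b c"
  obtains a' b' c' where "cmat_powr (rsym a b c) r = rsym a' b' c'" and "posdef2 a' b' c'"
proof -
  obtain a' b' c' where eq: "cmat_powr (rsym a b c) r = rsym a' b' c'"
  proof (cases "b = 0")
    case True
    then show ?thesis
      using that cmat_powr_rsym_diag posdef2_diag_pos[OF assms] by blast
  next
    case False
    then show ?thesis
      using that cmat_powr_rsym_chord[OF assms] by blast
  qed
  have "a' + c' = eig_powr_sum (a + c) (a * c - b\<^sup>2) r"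
    using trace_cmat_powr_rsym[OF assms, of r] by (simp add: eq del: of_real_add)
  moreover have "a' * c' - b'\<^sup>2 = (a * c - b\<^sup>2) powr r"
    using det_cmat_powr_rsym[OF assms, of r] by (simp add: eq del: of_real_mult of_real_diff of_real_power)
  moreover have "0 < eig_powr_sum (a + c) (a * c - b\<^sup>2) r" and "0 < (a * c - b\<^sup>2) powr r"
    using assms by (auto simp: posdef2_def intro: eig_powr_sum_pos)
  ultimately have "posdef2 a' b' c'"
    unfolding posdef2_def by linarith
  with eq show ?thesis
    by (rule that)
qed

lemma sqrt_congruence_rsym_diag:
  assumes "posdef2 a b c" and "0 < m"
  obtains x y z where "cmat_powr (rsym a b c) (1/2) ** rsym 1 0 m ** cmat_powr (rsym a b c) (1/2) = rsym x y z"
    and "posdef2 x y z" and "a \<le> x + z" and "x * z - y\<^sup>2 = m * (a * c - b\<^sup>2)"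
proof -
  obtain x y z where S: "cmat_powr (rsym a b c) (1/2) = rsym x y z"
    using cmat_powr_rsym_posdef2[OF assms(1)] by blast
  obtain U d where "spectral_decomp (rsym a b c) U d"
    using rsym_spectral_decomp[OF assms(1)] .
  then have "rsym x y z ** rsym x y z = rsym a b c"
    using cmat_powr_half_square S by metis
  then have a: "x\<^sup>2 + y\<^sup>2 = a" and b: "x * y + y * z = b" and c: "y\<^sup>2 + z\<^sup>2 = c"
    by (simp_all add: rsym_square)
  have det: "(x\<^sup>2 + m * y\<^sup>2) * (y\<^sup>2 + m * z\<^sup>2) - (x * y + m * y * z)\<^sup>2 = m * (a * c - b\<^sup>2)"
    unfolding a[symmetric] b[symmetric] c[symmetric] by (simp add: power2_eq_square algebra_simps)
  have "a \<le> x\<^sup>2 + m * y\<^sup>2 + (y\<^sup>2 + m * z\<^sup>2)"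
    using assms(2) by (simp add: a[symmetric])
  moreover have "0 < a" and "0 < m * (a * c - b\<^sup>2)"
    using assms posdef2_diag_pos(1)[OF assms(1)] by (simp_all add: posdef2_def)
  ultimately have "posdef2 (x\<^sup>2 + m * y\<^sup>2) (x * y + m * y * z) (y\<^sup>2 + m * z\<^sup>2)"
    using det unfolding posdef2_def by linarith
  with \<open>a \<le> _\<close> det show ?thesis
    by (intro that) (simp_all add: S rsym_congruence_diag)
qed

section \<open>The test pair\<close>

lemma gmean_inv_rsym_diag:
  assumes "0 < h"
  shows "gmean \<alpha> (matrix_inv (rsym 1 0 (h\<^sup>2))) B
     = rsym 1 0 (1 / h) ** cmat_powr (rsym 1 0 h ** B ** rsym 1 0 h) \<alpha> ** rsym 1 0 (1 / h)"
proof -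
  have "posdef2 1 0 (h\<^sup>2)"
    using assms by (simp add: posdef2_def add_pos_nonneg)
  then obtain U d where "spectral_decomp (rsym 1 0 (h\<^sup>2)) U d"
    by (rule rsym_spectral_decomp)
  then have inv: "matrix_inv (rsym 1 0 (h\<^sup>2)) = rsym 1 0 (1 / h\<^sup>2)"
    using assms by (simp add: matrix_inv_spectral cmat_powr_rsym_diag powr_minus_divide)
  have half: "(1 / h\<^sup>2) powr (1/2) = 1 / h"
    using assms by (simp add: powr_half_sqrt real_sqrt_divide)
  then have "(1 / h\<^sup>2) powr (-1/2) = h"
    using powr_minus_divide[of "1 / h\<^sup>2" "1/2"] by simp
  with half assms show ?thesis
    unfolding gmean_def inv by (simp add: cmat_powr_rsym_diag)
qed

(* With A = diag(1, h^2) and C = A^(1/2) B A^(1/2), the trace of Ftilde alpha A B is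
   (C^alpha)_11 plus a nonnegative term; only the lower bound by (C^alpha)_11 is kept. *)
lemma Ftilde_diag_rsym:
  fixes \<alpha> h a b c :: real
  assumes "0 < h" and "posdef2 a b c" and "b \<noteq> 0"
  defines "t \<equiv> a + h\<^sup>2 * c" and "D \<equiv> h\<^sup>2 * (a * c - b\<^sup>2)"
  obtains x y z where "Ftilde \<alpha> (rsym 1 0 (h\<^sup>2)) (rsym a b c) = rsym x y z" and "posdef2 x y z"
    and "chord_icept t D \<alpha> + chord_slope t D \<alpha> * a \<le> x + z"
    and "x * z - y\<^sup>2 = (h\<^sup>2) powr (1 - \<alpha>) * (a * c - b\<^sup>2) powr \<alpha>"
proof -
  have C_det: "a * (h\<^sup>2 * c) - (h * b)\<^sup>2 = D"
    by (simp add: D_def power_mult_distrib algebra_simps)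
  have C_pos: "posdef2 a (h * b) (h\<^sup>2 * c)"
    using posdef2_congruence[OF assms(2)] assms(1) by simp
  obtain a' b' c' where C_powr: "cmat_powr (rsym a (h * b) (h\<^sup>2 * c)) \<alpha> = rsym a' b' c'"
    and "posdef2 a' b' c'"
    using cmat_powr_rsym_posdef2[OF C_pos] .
  have a': "a' = chord_icept t D \<alpha> + chord_slope t D \<alpha> * a"
    using cmat_powr_rsym_chord[OF C_pos, of \<alpha>] assms(1,3) by (simp add: C_powr C_det t_def)
  have det_a': "a' * c' - b'\<^sup>2 = D powr \<alpha>"
    using det_cmat_powr_rsym[OF C_pos, of \<alpha>] C_det
    by (simp add: C_powr del: of_real_mult of_real_diff of_real_power)
  have G: "gmean \<alpha> (matrix_inv (rsym 1 0 (h\<^sup>2))) (rsym a b c) = rsym a' (b' / h) (c' / h\<^sup>2)"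
    using assms(1) by (simp add: gmean_inv_rsym_diag rsym_diag_congruence C_powr power_divide)
  have "posdef2 a' (b' / h) (c' / h\<^sup>2)"
    using posdef2_congruence[OF \<open>posdef2 a' b' c'\<close>, of "1 / h"] assms(1) by (simp add: power_divide)
  moreover have "0 < (h\<^sup>2) powr (2 * (1 - \<alpha>))"
    using assms(1) by simp
  ultimately obtain x y z
    where F: "Ftilde \<alpha> (rsym 1 0 (h\<^sup>2)) (rsym a b c) = rsym x y z" and "posdef2 x y z" and "a' \<le> x + z"
      and det: "x * z - y\<^sup>2 = (h\<^sup>2) powr (2 * (1 - \<alpha>)) * (a' * (c' / h\<^sup>2) - (b' / h)\<^sup>2)"
    by (rule sqrt_congruence_rsym_diag) (use assms(1) in \<open>simp add: Ftilde_def G cmat_powr_rsym_diag\<close>)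
  have "(h\<^sup>2) powr (2 * (1 - \<alpha>)) * (h\<^sup>2) powr \<alpha> = h\<^sup>2 * (h\<^sup>2) powr (1 - \<alpha>)"
  proof -
    have "(h\<^sup>2) powr (2 * (1 - \<alpha>)) * (h\<^sup>2) powr \<alpha> = (h\<^sup>2) powr (1 + (1 - \<alpha>))"
      by (simp add: algebra_simps flip: powr_add)
    then show ?thesis
      by (subst (asm) powr_add) simp
  qed
  moreover have "a' * (c' / h\<^sup>2) - (b' / h)\<^sup>2 = D powr \<alpha> / h\<^sup>2"
    using assms(1) det_a' by (simp add: power_divide field_simps)
  moreover have "D powr \<alpha> = (h\<^sup>2) powr \<alpha> * (a * c - b\<^sup>2) powr \<alpha>"
    by (simp add: D_def powr_mult)
  ultimately have "x * z - y\<^sup>2 = (h\<^sup>2) powr (1 - \<alpha>) * (a * c - b\<^sup>2) powr \<alpha>"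
    using assms(1) by (simp add: det mult.assoc[symmetric])
  with F \<open>posdef2 x y z\<close> \<open>a' \<le> x + z\<close> a' show ?thesis
    by (intro that) simp_all
qed

lemma trace_SGtilde_rot_diag:
  fixes \<alpha> p c w h :: real
  assumes "0 < p" and cw: "c\<^sup>2 + w\<^sup>2 = 1" and "0 < c" and "0 < w" and "0 < h" and "h < 1"
  defines "s \<equiv> h powr (2 / p)" and "t \<equiv> c\<^sup>2 + w\<^sup>2 * h\<^sup>2 + h\<^sup>2 * (w\<^sup>2 + c\<^sup>2 * h\<^sup>2)"
  obtains T where "chord_icept t (h ^ 4) \<alpha> + chord_slope t (h ^ 4) \<alpha> * (c\<^sup>2 + w\<^sup>2 * h\<^sup>2) \<le> T"
    and "Re (trace (SGtilde \<alpha> p (rsym 1 0 s) (rot_diag c w 1 s)))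
         = eig_powr_sum T (h\<^sup>2) (1 / p)"
proof -
  have "0 < s" and s_powr: "s powr p = h\<^sup>2"
    using assms(1,5) by (simp_all add: s_def powr_powr flip: powr_numeral)
  have A_powr: "cmat_powr (rsym 1 0 s) p = rsym 1 0 (h\<^sup>2)"
    using \<open>0 < s\<close> s_powr by (simp add: cmat_powr_rsym_diag)
  have B_powr: "cmat_powr (rot_diag c w 1 s) p
      = rsym (c\<^sup>2 + w\<^sup>2 * h\<^sup>2) (c * w * (1 - h\<^sup>2)) (w\<^sup>2 + c\<^sup>2 * h\<^sup>2)"
    unfolding cmat_powr_rot_diag[OF cw zero_less_one \<open>0 < s\<close>] using s_powr by (simp add: rot_diag_eq_rsym)
  have B_pos: "posdef2 (c\<^sup>2 + w\<^sup>2 * h\<^sup>2) (c * w * (1 - h\<^sup>2)) (w\<^sup>2 + c\<^sup>2 * h\<^sup>2)"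
    using posdef2_rot_diag[OF cw, of 1 "h\<^sup>2"] assms(5) by simp
  have B_det: "(c\<^sup>2 + w\<^sup>2 * h\<^sup>2) * (w\<^sup>2 + c\<^sup>2 * h\<^sup>2) - (c * w * (1 - h\<^sup>2))\<^sup>2 = h\<^sup>2"
    using rot_diag_det[OF cw, of 1 "h\<^sup>2"] by simp
  have "h\<^sup>2 < 1"
    using assms(5,6) by (simp add: power_less_one_iff)
  then have "c * w * (1 - h\<^sup>2) \<noteq> 0"
    using assms(3,4) by simp
  then obtain x y z
    where F: "Ftilde \<alpha> (rsym 1 0 (h\<^sup>2)) (rsym (c\<^sup>2 + w\<^sup>2 * h\<^sup>2) (c * w * (1 - h\<^sup>2)) (w\<^sup>2 + c\<^sup>2 * h\<^sup>2))
        = rsym x y z"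
      and "posdef2 x y z"
      and bound: "chord_icept t (h\<^sup>2 * h\<^sup>2) \<alpha> + chord_slope t (h\<^sup>2 * h\<^sup>2) \<alpha> * (c\<^sup>2 + w\<^sup>2 * h\<^sup>2) \<le> x + z"
      and det: "x * z - y\<^sup>2 = (h\<^sup>2) powr (1 - \<alpha>) * (h\<^sup>2) powr \<alpha>"
    using Ftilde_diag_rsym[OF assms(5) B_pos, of \<alpha>] unfolding B_det t_def by blast
  have "x * z - y\<^sup>2 = h\<^sup>2"
    unfolding det by (simp flip: powr_add)
  then have "Re (trace (SGtilde \<alpha> p (rsym 1 0 s) (rot_diag c w 1 s)))
      = eig_powr_sum (x + z) (h\<^sup>2) (1 / p)"
    by (simp add: SGtilde_def A_powr B_powr F trace_cmat_powr_rsym[OF \<open>posdef2 x y z\<close>])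
  moreover have "h\<^sup>2 * h\<^sup>2 = h ^ 4"
    by simp
  ultimately show ?thesis
    using that bound by metis
qed

lemma trace_Amean_rot_diag:
  fixes \<alpha> q c w s :: real
  assumes "0 < \<alpha>" and "\<alpha> < 1" and cw: "c\<^sup>2 + w\<^sup>2 = 1" and "0 < s"
  defines "t \<equiv> s powr q"
  shows "Re (trace (Amean \<alpha> q (rsym 1 0 s) (rot_diag c w 1 s)))
     = eig_powr_sum (1 + t) (t + \<alpha> * (1 - \<alpha>) * w\<^sup>2 * (1 - t)\<^sup>2) (1 / q)"
proof -
  define M11 M12 M22 where "M11 = (1 - \<alpha>) + \<alpha> * (c\<^sup>2 + w\<^sup>2 * t)" and "M12 = \<alpha> * (c * w * (1 - t))"
    and "M22 = (1 - \<alpha>) * t + \<alpha> * (w\<^sup>2 + c\<^sup>2 * t)"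
  have "0 < t"
    using assms(4) by (simp add: t_def)
  have "(1 - \<alpha>) *\<^sub>R cmat_powr (rsym 1 0 s) q + \<alpha> *\<^sub>R cmat_powr (rot_diag c w 1 s) q
      = rsym M11 M12 M22"
    unfolding cmat_powr_rot_diag[OF cw zero_less_one assms(4)]
    using assms(4) by (simp add: cmat_powr_rsym_diag rot_diag_eq_rsym M11_def M12_def M22_def t_def)
  moreover have trace_M: "M11 + M22 = 1 + t"
    unfolding M11_def M22_def using cw by algebra
  moreover have det_M: "M11 * M22 - M12\<^sup>2 = t + \<alpha> * (1 - \<alpha>) * w\<^sup>2 * (1 - t)\<^sup>2"
    unfolding M11_def M12_def M22_def using cw by algebra
  moreover have "posdef2 M11 M12 M22"
    unfolding posdef2_def trace_M using det_M \<open>0 < t\<close> assms(1,2)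
    by (smt (verit) mult_nonneg_nonneg zero_le_power2)
  ultimately show ?thesis
    by (simp add: Amean_def trace_cmat_powr_rsym)
qed

lemma tendsto_trace_Amean_rot_diag:
  fixes \<alpha> p q c w :: real
  assumes "0 < \<alpha>" and "\<alpha> < 1" and "0 < p" and "0 < q" and cw: "c\<^sup>2 + w\<^sup>2 = 1" and "0 < w"
  shows "((\<lambda>h. Re (trace (Amean \<alpha> q (rsym 1 0 (h powr (2 / p)))
            (rot_diag c w 1 (h powr (2 / p))))))
          \<longlongrightarrow> eig_powr_sum 1 (\<alpha> * (1 - \<alpha>) * w\<^sup>2) (1 / q)) (at_right 0)"
proof -
  define \<tau> where "\<tau> h = (h powr (2 / p)) powr q" for h
  have "((\<lambda>h. h powr (2 / p * q)) \<longlongrightarrow> 0 powr (2 / p * q)) (at_right 0)"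
    using assms(3,4) eventually_at_right_less[of 0]
    by (intro tendsto_powr' tendsto_ident_at tendsto_const) (auto elim: eventually_mono)
  moreover have "\<tau> = (\<lambda>h. h powr (2 / p * q))"
    by (simp add: \<tau>_def powr_powr fun_eq_iff)
  ultimately have "(\<tau> \<longlongrightarrow> 0) (at_right 0)"
    using assms(3,4) by simp
  moreover have "0 < \<alpha> * (1 - \<alpha>) * w\<^sup>2"
    using assms(1,2,6) by simp
  moreover have "\<alpha> * (1 - \<alpha>) * w\<^sup>2 \<le> 1 / 4"
  proof -
    have "\<alpha> * (1 - \<alpha>) \<le> 1 / 4"
      using zero_le_power2[of "\<alpha> - 1 / 2"] by (simp add: power2_eq_square algebra_simps)
    moreover have "w\<^sup>2 \<le> 1"
      using cw zero_le_power2[of c] by linarith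
    ultimately show ?thesis
      using assms(1,2) by (smt (verit) mult_left_le mult_nonneg_nonneg zero_le_power2)
  qed
  ultimately have "((\<lambda>h. eig_powr_sum (1 + \<tau> h) (\<tau> h + \<alpha> * (1 - \<alpha>) * w\<^sup>2 * (1 - \<tau> h)\<^sup>2) (1 / q))
      \<longlongrightarrow> eig_powr_sum (1 + 0) (0 + \<alpha> * (1 - \<alpha>) * w\<^sup>2 * (1 - 0)\<^sup>2) (1 / q)) (at_right 0)"
    by (intro tendsto_eig_powr_sum tendsto_intros) simp_all
  moreover have "\<forall>\<^sub>F h in at_right 0. eig_powr_sum (1 + \<tau> h) (\<tau> h + \<alpha> * (1 - \<alpha>) * w\<^sup>2 * (1 - \<tau> h)\<^sup>2) (1 / q)
      = Re (trace (Amean \<alpha> q (rsym 1 0 (h powr (2 / p))) (rot_diag c w 1 (h powr (2 / p)))))"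
    using eventually_at_right_less[of 0]
    by eventually_elim (simp add: trace_Amean_rot_diag[OF assms(1,2) cw] \<tau>_def)
  ultimately show ?thesis
    by (auto intro: Lim_transform_eventually)
qed

lemma liminf_trace_SGtilde_rot_diag:
  fixes \<alpha> p c w :: real
  assumes "0 < \<alpha>" and "0 < p" and cw: "c\<^sup>2 + w\<^sup>2 = 1" and "0 < c" and "0 < w"
  obtains L where "(L \<longlongrightarrow> ((c\<^sup>2) powr \<alpha>) powr (1 / p)) (at_right 0)"
    and "\<forall>\<^sub>F h in at_right 0. L h \<le> Re (trace (SGtilde \<alpha> p (rsym 1 0 (h powr (2 / p)))
          (rot_diag c w 1 (h powr (2 / p)))))"
proof -
  define t where "t h = c\<^sup>2 + w\<^sup>2 * h\<^sup>2 + h\<^sup>2 * (w\<^sup>2 + c\<^sup>2 * h\<^sup>2)" for h :: real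
  define a where "a h = chord_icept (t h) (h ^ 4) \<alpha> + chord_slope (t h) (h ^ 4) \<alpha> * (c\<^sup>2 + w\<^sup>2 * h\<^sup>2)" for h
  have "0 < c\<^sup>2"
    using assms(4) by simp
  have h: "((\<lambda>h. h) \<longlongrightarrow> (0::real)) (at_right 0)"
    by (rule tendsto_ident_at)
  have a_lim: "(a \<longlongrightarrow> (c\<^sup>2) powr \<alpha>) (at_right 0)"
    unfolding a_def t_def using \<open>0 < c\<^sup>2\<close> assms(1)
    by (intro tendsto_chord_at_eig_max) (auto intro!: tendsto_eq_intros h)
  then have max: "((\<lambda>h. eig_max (a h) (h\<^sup>2)) \<longlongrightarrow> (c\<^sup>2) powr \<alpha>) (at_right 0)"
    using tendsto_eig_max[of a _ _ "\<lambda>h. h\<^sup>2" 0] h by (auto intro!: tendsto_eq_intros simp: eig_max_zero)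
  show ?thesis
  proof
    show "((\<lambda>h. eig_max (a h) (h\<^sup>2) powr (1 / p)) \<longlongrightarrow> ((c\<^sup>2) powr \<alpha>) powr (1 / p)) (at_right 0)"
      using \<open>0 < c\<^sup>2\<close> by (intro tendsto_powr max tendsto_const) simp
    have "\<forall>\<^sub>F h in at_right 0. 0 < a h \<and> 0 < eig_max (a h) (h\<^sup>2) \<and> h \<in> {0<..<1}"
      using order_tendstoD(1)[OF a_lim] order_tendstoD(1)[OF max] eventually_at_right_real[of 0 1]
        \<open>0 < c\<^sup>2\<close> by (simp add: eventually_conj_iff)
    then show "\<forall>\<^sub>F h in at_right 0. eig_max (a h) (h\<^sup>2) powr (1 / p)
        \<le> Re (trace (SGtilde \<alpha> p (rsym 1 0 (h powr (2 / p))) (rot_diag c w 1 (h powr (2 / p)))))"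
    proof eventually_elim
      case (elim h)
      then obtain T where "a h \<le> T" and "Re (trace (SGtilde \<alpha> p (rsym 1 0 (h powr (2 / p)))
            (rot_diag c w 1 (h powr (2 / p))))) = eig_powr_sum T (h\<^sup>2) (1 / p)"
        using trace_SGtilde_rot_diag[OF assms(2) cw assms(4,5), of h \<alpha>] by (auto simp: a_def t_def)
      with elim show ?case
        using assms(2) by (simp add: eig_max_powr_le_eig_powr_sum)
    qed
  qed
qed

section \<open>The scalar inequality\<close>

lemma eig_trace_one_bounds:
  assumes "0 < \<kappa>" and "\<kappa> \<le> 1 / 4"
  shows "0 < eig_max 1 \<kappa>" and "eig_max 1 \<kappa> \<le> 1 - \<kappa>" and "eig_min 1 \<kappa> \<le> 2 * \<kappa>"
proof -
  have disc: "\<kappa> \<le> 1\<^sup>2 / 4"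
    using assms(2) by simp
  have sum: "eig_max 1 \<kappa> + eig_min 1 \<kappa> = 1" and prod: "eig_max 1 \<kappa> * eig_min 1 \<kappa> = \<kappa>"
    using eig_max_add_eig_min eig_max_mult_eig_min[OF disc] by blast+
  have "0 < eig_min 1 \<kappa>" and le: "eig_min 1 \<kappa> \<le> eig_max 1 \<kappa>"
    using assms(1) eig_min_pos eig_min_le_eig_max[OF disc] by simp_all
  then show "0 < eig_max 1 \<kappa>"
    by linarith
  have "eig_max 1 \<kappa> * eig_min 1 \<kappa> \<le> 1 * eig_min 1 \<kappa>"
    using sum \<open>0 < eig_min 1 \<kappa>\<close> by (intro mult_right_mono) simp_all
  with sum prod show "eig_max 1 \<kappa> \<le> 1 - \<kappa>"
    by simp
  have "1 / 2 * eig_min 1 \<kappa> \<le> eig_max 1 \<kappa> * eig_min 1 \<kappa>"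
    using sum le \<open>0 < eig_min 1 \<kappa>\<close> by (intro mult_right_mono) simp_all
  with prod show "eig_min 1 \<kappa> \<le> 2 * \<kappa>"
    by simp
qed

lemma powr_inverse_le_of_le_one_minus:
  fixes x \<kappa> q :: real
  assumes "0 < x" and "x \<le> 1 - \<kappa>" and "0 < q" and "0 \<le> \<kappa>"
  shows "x powr (1 / q) \<le> 1 / (1 + \<kappa> / q)"
proof -
  have "ln x \<le> - \<kappa>"
    using ln_le_minus_one[OF assms(1)] assms(2) by linarith
  then have "ln x / q \<le> - \<kappa> / q"
    using assms(3) by (intro divide_right_mono) simp_all
  then have "x powr (1 / q) \<le> exp (- \<kappa> / q)"
    using assms(1) by (simp add: powr_def)
  also have "\<dots> = 1 / exp (\<kappa> / q)"
    by (simp add: exp_minus inverse_eq_divide)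
  also have "\<dots> \<le> 1 / (1 + \<kappa> / q)"
    using assms(3,4) by (intro divide_left_mono) (simp_all add: add_pos_nonneg)
  finally show ?thesis .
qed

lemma one_minus_powr_ge:
  fixes \<delta> r :: real
  assumes "0 \<le> \<delta>" and "\<delta> < 1" and "0 \<le> r"
  shows "1 - r * \<delta> / (1 - \<delta>) \<le> (1 - \<delta>) powr r"
proof -
  have "ln (1 / (1 - \<delta>)) \<le> 1 / (1 - \<delta>) - 1"
    using assms(2) by (intro ln_le_minus_one) simp
  then have "- (\<delta> / (1 - \<delta>)) \<le> ln (1 - \<delta>)"
    using assms(2) by (simp add: ln_div field_simps)
  then have "- (r * \<delta> / (1 - \<delta>)) \<le> r * ln (1 - \<delta>)"
    using assms(3) by (metis minus_mult_right mult_left_mono times_divide_eq_right)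
  moreover have "1 + r * ln (1 - \<delta>) \<le> (1 - \<delta>) powr r"
    using assms(2) by (simp add: powr_def)
  ultimately show ?thesis
    by linarith
qed

lemma eig_powr_sum_one_le:
  assumes "0 < \<kappa>" and "\<kappa> \<le> 1 / 4" and "0 < q"
  shows "eig_powr_sum 1 \<kappa> (1 / q) \<le> 1 / (1 + \<kappa> / q) + (2 * \<kappa>) powr (1 / q)"
  unfolding eig_powr_sum_def using eig_trace_one_bounds[OF assms(1,2)] assms
  by (intro add_mono powr_inverse_le_of_le_one_minus powr_mono2) (simp_all add: eig_min_nonneg)

(* Divided by delta, the two sides tend to r and k / q respectively: the power term is o(delta)
   because 1 / q > 1. *)
lemma eventually_linear_gap:
  fixes k q r :: real
  assumes "0 < q" and "q < 1" and "r < k / q"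
  shows "\<forall>\<^sub>F \<delta> in at_right 0. r * \<delta> / (1 - \<delta>) + (2 * k * \<delta>) powr (1 / q) < (k * \<delta> / q) / (1 + k * \<delta> / q)"
proof -
  define \<phi> where "\<phi> \<delta> = (k / q) / (1 + k * \<delta> / q) - r / (1 - \<delta>) - (2 * k) powr (1 / q) * \<delta> powr (1 / q - 1)"
    for \<delta>
  have "((\<lambda>\<delta>. \<delta> powr (1 / q - 1)) \<longlongrightarrow> 0 powr (1 / q - 1)) (at_right 0)"
    using assms(1,2) eventually_at_right_less[of 0]
    by (intro tendsto_powr' tendsto_ident_at tendsto_const) (auto elim: eventually_mono)
  then have "(\<phi> \<longlongrightarrow> (k / q) / (1 + k * 0 / q) - r / (1 - 0) - (2 * k) powr (1 / q) * 0) (at_right 0)"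
    unfolding \<phi>_def using assms(1,2) by (intro tendsto_intros tendsto_ident_at) simp_all
  then have "\<forall>\<^sub>F \<delta> in at_right 0. 0 < \<phi> \<delta>"
    using assms(3) by (intro order_tendstoD(1)) auto
  then show ?thesis
    using eventually_at_right_less[of 0]
  proof eventually_elim
    case (elim \<delta>)
    have "\<delta> * \<delta> powr (1 / q - 1) = \<delta> powr 1 * \<delta> powr (1 / q - 1)"
      using elim by simp
    also have "\<dots> = \<delta> powr (1 / q)"
      by (simp only: powr_add[symmetric]) simp
    finally have "(2 * k * \<delta>) powr (1 / q) = \<delta> * ((2 * k) powr (1 / q) * \<delta> powr (1 / q - 1))"
      by (simp add: powr_mult mult_ac)
    then have "\<delta> * \<phi> \<delta> = (k * \<delta> / q) / (1 + k * \<delta> / q) - r * \<delta> / (1 - \<delta>) - (2 * k * \<delta>) powr (1 / q)"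
      by (simp add: \<phi>_def algebra_simps)
    moreover have "0 < \<delta> * \<phi> \<delta>"
      using elim by simp
    ultimately show ?case
      by linarith
  qed
qed

lemma exists_eig_powr_sum_less:
  fixes \<alpha> p q :: real
  assumes "0 < \<alpha>" and "\<alpha> < 1" and "0 < p" and "0 < q" and "q < 1" and "q < (1 - \<alpha>) * p"
  obtains \<delta> where "0 < \<delta>" and "\<delta> < 1" and "eig_powr_sum 1 (\<alpha> * (1 - \<alpha>) * \<delta>) (1 / q) < (1 - \<delta>) powr (\<alpha> / p)"
proof -
  define k r where "k = \<alpha> * (1 - \<alpha>)" and "r = \<alpha> / p"
  have "0 < k" and "0 \<le> r"
    using assms(1-3) by (simp_all add: k_def r_def)
  have "k \<le> 1 / 4"
    using zero_le_power2[of "\<alpha> - 1 / 2"] by (simp add: k_def power2_eq_square algebra_simps)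
  have "\<alpha> * q + \<alpha> * (\<alpha> * p) < \<alpha> * p"
    using mult_strict_left_mono[OF assms(6,1)] by (simp add: algebra_simps)
  then have "r < k / q"
    using assms(3,4) by (simp add: k_def r_def field_simps)
  then obtain \<delta> where "0 < \<delta>" and "\<delta> < 1"
    and gap: "r * \<delta> / (1 - \<delta>) + (2 * k * \<delta>) powr (1 / q) < (k * \<delta> / q) / (1 + k * \<delta> / q)"
    using eventually_happens'[OF _ eventually_conj[OF eventually_linear_gap eventually_at_right_real[of 0 1]]]
      assms(4,5) by fastforce
  have "k * \<delta> \<le> k"
    using \<open>0 < k\<close> \<open>\<delta> < 1\<close> by (simp add: mult_left_le)
  with \<open>k \<le> 1 / 4\<close> have "k * \<delta> \<le> 1 / 4"
    by linarith
  then have "eig_powr_sum 1 (k * \<delta>) (1 / q) \<le> 1 / (1 + k * \<delta> / q) + (2 * (k * \<delta>)) powr (1 / q)"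
    using \<open>0 < k\<close> \<open>0 < \<delta>\<close> assms(4) by (intro eig_powr_sum_one_le) simp_all
  also have "1 / (1 + k * \<delta> / q) = 1 - (k * \<delta> / q) / (1 + k * \<delta> / q)"
  proof -
    have "0 < k * \<delta> / q"
      using assms(4) \<open>0 < k\<close> \<open>0 < \<delta>\<close> by simp
    moreover have "1 / (1 + x) = 1 - x / (1 + x)" if "0 < x" for x :: real
      using that by (simp add: field_simps)
    ultimately show ?thesis
      by blast
  qed
  also have "1 - (k * \<delta> / q) / (1 + k * \<delta> / q) + (2 * (k * \<delta>)) powr (1 / q) < 1 - r * \<delta> / (1 - \<delta>)"
    using gap by (simp add: mult.assoc)
  also have "\<dots> \<le> (1 - \<delta>) powr r"
    using \<open>0 < \<delta>\<close> \<open>\<delta> < 1\<close> \<open>0 \<le> r\<close> by (intro one_minus_powr_ge) simp_all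
  finally show ?thesis
    using that \<open>0 < \<delta>\<close> \<open>\<delta> < 1\<close> by (simp add: k_def r_def mult.assoc)
qed

theorem theorem4p37:
  fixes \<alpha> p q :: real
  assumes "0 < \<alpha>" and "\<alpha> < 1" and "0 < p" and "0 < q"
    and "\<forall>A B :: complex^2^2. cmat_posdef A \<and> cmat_posdef B \<longrightarrow>
           Re (trace (SGtilde \<alpha> p A B)) \<le> Re (trace (Amean \<alpha> q A B))"
  shows "min 1 ((1 - \<alpha>) * p) \<le> q"
proof (rule ccontr)
  assume "\<not> min 1 ((1 - \<alpha>) * p) \<le> q"
  then obtain \<delta> where "0 < \<delta>" and "\<delta> < 1"
    and gap: "eig_powr_sum 1 (\<alpha> * (1 - \<alpha>) * \<delta>) (1 / q) < (1 - \<delta>) powr (\<alpha> / p)"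
    using exists_eig_powr_sum_less[OF assms(1-4)] by force
  define c w where "c = sqrt (1 - \<delta>)" and "w = sqrt \<delta>"
  have "0 < c" "0 < w" and c2: "c\<^sup>2 = 1 - \<delta>" and w2: "w\<^sup>2 = \<delta>"
    using \<open>0 < \<delta>\<close> \<open>\<delta> < 1\<close> by (simp_all add: c_def w_def)
  then have cw: "c\<^sup>2 + w\<^sup>2 = 1"
    by simp
  obtain L where L: "(L \<longlongrightarrow> ((c\<^sup>2) powr \<alpha>) powr (1 / p)) (at_right 0)"
    and L_le: "\<forall>\<^sub>F h in at_right 0.
      L h \<le> Re (trace (SGtilde \<alpha> p (rsym 1 0 (h powr (2 / p))) (rot_diag c w 1 (h powr (2 / p)))))"
    using liminf_trace_SGtilde_rot_diag[OF assms(1,3) cw \<open>0 < c\<close> \<open>0 < w\<close>] by blast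
  have "\<forall>\<^sub>F h in at_right 0.
      L h \<le> Re (trace (Amean \<alpha> q (rsym 1 0 (h powr (2 / p))) (rot_diag c w 1 (h powr (2 / p)))))"
    using L_le eventually_at_right_less[of 0]
  proof eventually_elim
    case (elim h)
    then have "cmat_posdef (rsym 1 0 (h powr (2 / p)))" "cmat_posdef (rot_diag c w 1 (h powr (2 / p)))"
      using rot_diag_posdef[OF cw] by (simp_all add: rsym_posdef posdef2_def add_pos_nonneg)
    with elim assms(5) show ?case
      by (meson order_trans)
  qed
  with L tendsto_trace_Amean_rot_diag[OF assms(1-4) cw \<open>0 < w\<close>]
  have "((c\<^sup>2) powr \<alpha>) powr (1 / p) \<le> eig_powr_sum 1 (\<alpha> * (1 - \<alpha>) * w\<^sup>2) (1 / q)"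
    by (intro tendsto_le[OF trivial_limit_at_right_real])
  with gap show False
    by (simp add: c2 w2 powr_powr)
qed

end
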